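(* Let $\mathcal{P}$ be a ${\rm DLP}^{<}$ program and let $M$ be a (${\rm DLP}^{<}$-)answer set for $\mathcal{P}$. Then $M$ is a minimal model of $\mathcal{P}$, i.e. $M$ is a model for $\mathcal{P}$ and no proper subset of $M$ is a model for $\mathcal{P}$.
   Context: Syntax. Fix pairwise disjoint sets of variables, predicates and constants (no function symbols), and a finite strictly partially ordered set $(\mathcal{O},<)$ of object identifiers. An atom is $p(t_1,\dots,t_n)$ with $p$ an $n$-ary predicate and each $t_i$ a constant or variable. A literal is an atom $p$ or its strong negation $\neg p$; for a literal $L$, $\neg.L$ denotes its complementary literal. A rule has the form $a_1\vee\dots\vee a_n \leftarrow b_1,\dots,b_k,\ \mathtt{not}\ b_{k+1},\dots,\mathtt{not}\ b_m\ \otimes$ with $n\ge 1$, $m\ge 0$, all $a_i,b_j$ literals, and $\otimes$ either "." (the rule is defeasible) or "!" (the rule is strict). $Head(r)=\{a_1,\dots,a_n\}$, $Body^+(r)=\{b_1,\dots,b_k\}$, $Body^-(r)=\{b_{k+1},\dots,b_m\}$. An object is a pair $(oid(o),\Sigma(o))$ of an identifier in $\mathcal{O}$ and a set of rules; a knowledge base contains one object per identifier; the ${\rm DLP}^{<}$ program for $o$ is the set of objects $o'$ of the knowledge base with $o'=o$ or $o<o'$, ordered by $<$ on identifiers. Semantics. The Universe of $\mathcal{P}$ is the set of constants appearing in its rules; the Base $B_{\mathcal{P}}$ is the set of all ground literals (positive and negative) built from predicates of $\mathcal{P}$ and constants of the Universe. $ground(\mathcal{P})$ is the multiset of all ground instances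 of rules of $\mathcal{P}$ (instances of a rule occurring in several objects are kept distinct), and $obj\_of(r)$ is the object a ground instance $r$ comes from. An interpretation is a subset of $B_{\mathcal{P}}$ containing no pair of complementary literals. A ground literal $L$ is true in $I$ iff $L\in I$. The head of a ground rule is true in $I$ if some head literal is in $I$; the body is true in $I$ if $Body^+(r)\subseteq I$ and $Body^-(r)\cap I=\emptyset$; $r$ is satisfied in $I$ if its head is true or its body is not true in $I$. Ground rule $r_1$ threatens $r_2$ on $L$ if $\neg.L\in Head(r_1)$, $L\in Head(r_2)$, $obj\_of(r_1)<obj\_of(r_2)$ and $r_2$ is defeasible. $r_1$ overrides $r_2$ on $L$ in $I$ if $r_1$ threatens $r_2$ on $L$, $\neg.L\in I$, and the body of $r_2$ is true in $I$. A rule $r\in ground(\mathcal{P})$ is overridden in $I$ if for every $L\in Head(r)$ some $r_1\in ground(\mathcal{P})$ overrides $r$ on $L$ in $I$. $I$ is a model for $\mathcal{P}$ if every rule of $ground(\mathcal{P})$ is satisfied or overridden in $I$; it is a minimal model if no proper subset is a model. The reduction $G_I(\mathcal{P})$ is obtained from $ground(\mathcal{P})$ by (1) removing every rule overridden in $I$, (2) removing every rule $r$ with $Body^-(r)\cap I\neq\emptyset$, (3) deleting the $\mathtt{not}$-part of the remaining rules (and ignoring the strict/defeasible marker). For a set $S$ of ground rules, $pos(S)$ is the positive disjunctive program obtained by regarding each negative literal $\neg p(\bar t)$ as an atom of a new predicate $\neg p$. A model $M$ for $\mathcal{P}$ is a (${\rm DLP}^{<}$-)answer set for $\mathcal{P}$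 if $M$ is a minimal model (a subset-minimal set of atoms satisfying every rule) of $pos(G_M(\mathcal{P}))$. *)

theory Defs
  imports Main
begin

datatype ('c, 'v) trm = Cst 'c | Var 'v

datatype ('p, 'c, 'v) atom = Atom 'p "('c, 'v) trm list"

text \<open>Literals: an atom or its strong negation.\<close>
datatype ('p, 'c, 'v) lit = Pos "('p, 'c, 'v) atom" | Neg "('p, 'c, 'v) atom"

fun compl :: "('p, 'c, 'v) lit \<Rightarrow> ('p, 'c, 'v) lit" where
  "compl (Pos a) = Neg a"
| "compl (Neg a) = Pos a"

text \<open>A rule  a1 v ... v an <- b1,...,bk, not b(k+1),..., not bm  followed by
  "." (defeasible, strict = False) or "!" (strict = True).\<close>
record ('p, 'c, 'v) rule =
  hd :: "('p, 'c, 'v) lit list"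
  bpos :: "('p, 'c, 'v) lit list"
  bneg :: "('p, 'c, 'v) lit list"
  strict :: bool

definition Head :: "('p, 'c, 'v) rule \<Rightarrow> ('p, 'c, 'v) lit set" where
  "Head r = set (hd r)"
definition BodyP :: "('p, 'c, 'v) rule \<Rightarrow> ('p, 'c, 'v) lit set" where
  "BodyP r = set (bpos r)"
definition BodyN :: "('p, 'c, 'v) rule \<Rightarrow> ('p, 'c, 'v) lit set" where
  "BodyN r = set (bneg r)"

fun atom_of :: "('p, 'c, 'v) lit \<Rightarrow> ('p, 'c, 'v) atom" where
  "atom_of (Pos a) = a" | "atom_of (Neg a) = a"

fun args :: "('p, 'c, 'v) atom \<Rightarrow> ('c, 'v) trm list" where
  "args (Atom p ts) = ts"
fun pred :: "('p, 'c, 'v) atom \<Rightarrow> 'p" where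
  "pred (Atom p ts) = p"

definition rule_lits :: "('p, 'c, 'v) rule \<Rightarrow> ('p, 'c, 'v) lit set" where
  "rule_lits r = Head r \<union> BodyP r \<union> BodyN r"

definition lit_consts :: "('p, 'c, 'v) lit \<Rightarrow> 'c set" where
  "lit_consts l = {c. Cst c \<in> set (args (atom_of l))}"
definition lit_vars :: "('p, 'c, 'v) lit \<Rightarrow> 'v set" where
  "lit_vars l = {v. Var v \<in> set (args (atom_of l))}"

definition rule_vars :: "('p, 'c, 'v) rule \<Rightarrow> 'v set" where
  "rule_vars r = (\<Union>l\<in>rule_lits r. lit_vars l)"

text \<open>A knowledge base: a finite set Ids of object identifiers, strictly partially ordered
  by lt, with one object (o, Sigma o) per identifier.\<close>

definition strict_po_on :: "'o set \<Rightarrow> ('o \<Rightarrow> 'o \<Rightarrow> bool) \<Rightarrow> bool" where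
  "strict_po_on Ids lt \<longleftrightarrow> (\<forall>x\<in>Ids. \<not> lt x x) \<and>
     (\<forall>x\<in>Ids. \<forall>y\<in>Ids. \<forall>z\<in>Ids. lt x y \<longrightarrow> lt y z \<longrightarrow> lt x z)"

definition prog_objs :: "'o set \<Rightarrow> ('o \<Rightarrow> 'o \<Rightarrow> bool) \<Rightarrow> 'o \<Rightarrow> 'o set" where
  "prog_objs Ids lt o0 = {o' \<in> Ids. o' = o0 \<or> lt o0 o'}"

definition prog_rules ::
  "'o set \<Rightarrow> ('o \<Rightarrow> 'o \<Rightarrow> bool) \<Rightarrow> ('o \<Rightarrow> ('p, 'c, 'v) rule set) \<Rightarrow> 'o
     \<Rightarrow> ('o \<times> ('p, 'c, 'v) rule) set" where
  "prog_rules Ids lt Sig o0 = {(o', r). o' \<in> prog_objs Ids lt o0 \<and> r \<in> Sig o'}"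

definition universe ::
  "('o \<times> ('p, 'c, 'v) rule) set \<Rightarrow> 'c set" where
  "universe R = (\<Union>(o', r)\<in>R. \<Union>l\<in>rule_lits r. lit_consts l)"

definition preds_arities :: "('o \<times> ('p, 'c, 'v) rule) set \<Rightarrow> ('p \<times> nat) set" where
  "preds_arities R =
     (\<Union>(o', r)\<in>R. (\<lambda>l. (pred (atom_of l), length (args (atom_of l)))) ` rule_lits r)"

definition base :: "('o \<times> ('p, 'c, 'v) rule) set \<Rightarrow> ('p, 'c, 'v) lit set" where
  "base R = {l. (pred (atom_of l), length (args (atom_of l))) \<in> preds_arities R
               \<and> (\<forall>t\<in>set (args (atom_of l)). \<exists>c\<in>universe R. t = Cst c)}"

fun subst_trm :: "('v \<Rightarrow> 'c) \<Rightarrow> ('c, 'v) trm \<Rightarrow> ('c, 'v) trm" where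
  "subst_trm \<theta> (Cst c) = Cst c"
| "subst_trm \<theta> (Var v) = Cst (\<theta> v)"

fun subst_atom :: "('v \<Rightarrow> 'c) \<Rightarrow> ('p, 'c, 'v) atom \<Rightarrow> ('p, 'c, 'v) atom" where
  "subst_atom \<theta> (Atom p ts) = Atom p (map (subst_trm \<theta>) ts)"

fun subst_lit :: "('v \<Rightarrow> 'c) \<Rightarrow> ('p, 'c, 'v) lit \<Rightarrow> ('p, 'c, 'v) lit" where
  "subst_lit \<theta> (Pos a) = Pos (subst_atom \<theta> a)"
| "subst_lit \<theta> (Neg a) = Neg (subst_atom \<theta> a)"

definition subst_rule :: "('v \<Rightarrow> 'c) \<Rightarrow> ('p, 'c, 'v) rule \<Rightarrow> ('p, 'c, 'v) rule" where
  "subst_rule \<theta> r = \<lparr> hd = map (subst_lit \<theta>) (hd r), bpos = map (subst_lit \<theta>) (bpos r),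
                        bneg = map (subst_lit \<theta>) (bneg r), strict = strict r \<rparr>"

text \<open>ground(P): ground instances (over the Universe) of rules of P, tagged with the
  object they come from (so instances from different objects stay distinct); the first
  component of a ground rule is obj_of.\<close>
definition ground ::
  "('o \<times> ('p, 'c, 'v) rule) set \<Rightarrow> ('o \<times> ('p, 'c, 'v) rule) set" where
  "ground R = {(o', subst_rule \<theta> r) | o' r \<theta>.
                 (o', r) \<in> R \<and> (\<forall>v\<in>rule_vars r. \<theta> v \<in> universe R)}"

definition is_interp :: "('o \<times> ('p, 'c, 'v) rule) set \<Rightarrow> ('p, 'c, 'v) lit set \<Rightarrow> bool" where
  "is_interp R I \<longleftrightarrow> I \<subseteq> base R \<and> (\<forall>l\<in>I. compl l \<notin> I)"

definition head_true :: "('p, 'c, 'v) rule \<Rightarrow> ('p, 'c, 'v) lit set \<Rightarrow> bool" where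
  "head_true r I \<longleftrightarrow> Head r \<inter> I \<noteq> {}"

definition body_true :: "('p, 'c, 'v) rule \<Rightarrow> ('p, 'c, 'v) lit set \<Rightarrow> bool" where
  "body_true r I \<longleftrightarrow> BodyP r \<subseteq> I \<and> BodyN r \<inter> I = {}"

definition satisfied :: "('p, 'c, 'v) rule \<Rightarrow> ('p, 'c, 'v) lit set \<Rightarrow> bool" where
  "satisfied r I \<longleftrightarrow> head_true r I \<or> \<not> body_true r I"

definition threatens ::
  "('o \<Rightarrow> 'o \<Rightarrow> bool) \<Rightarrow> 'o \<times> ('p, 'c, 'v) rule \<Rightarrow> 'o \<times> ('p, 'c, 'v) rule
     \<Rightarrow> ('p, 'c, 'v) lit \<Rightarrow> bool" where
  "threatens lt r1 r2 L \<longleftrightarrow> compl L \<in> Head (snd r1) \<and> L \<in> Head (snd r2)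
      \<and> lt (fst r1) (fst r2) \<and> \<not> strict (snd r2)"

definition overrides ::
  "('o \<Rightarrow> 'o \<Rightarrow> bool) \<Rightarrow> 'o \<times> ('p, 'c, 'v) rule \<Rightarrow> 'o \<times> ('p, 'c, 'v) rule
     \<Rightarrow> ('p, 'c, 'v) lit \<Rightarrow> ('p, 'c, 'v) lit set \<Rightarrow> bool" where
  "overrides lt r1 r2 L I \<longleftrightarrow> threatens lt r1 r2 L \<and> compl L \<in> I \<and> body_true (snd r2) I"

definition overridden ::
  "('o \<Rightarrow> 'o \<Rightarrow> bool) \<Rightarrow> ('o \<times> ('p, 'c, 'v) rule) set \<Rightarrow> 'o \<times> ('p, 'c, 'v) rule
     \<Rightarrow> ('p, 'c, 'v) lit set \<Rightarrow> bool" where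
  "overridden lt R r I \<longleftrightarrow> (\<forall>L\<in>Head (snd r). \<exists>r1\<in>ground R. overrides lt r1 r L I)"

definition is_model ::
  "('o \<Rightarrow> 'o \<Rightarrow> bool) \<Rightarrow> ('o \<times> ('p, 'c, 'v) rule) set \<Rightarrow> ('p, 'c, 'v) lit set \<Rightarrow> bool" where
  "is_model lt R I \<longleftrightarrow> is_interp R I \<and>
     (\<forall>r\<in>ground R. satisfied (snd r) I \<or> overridden lt R r I)"

definition minimal_model ::
  "('o \<Rightarrow> 'o \<Rightarrow> bool) \<Rightarrow> ('o \<times> ('p, 'c, 'v) rule) set \<Rightarrow> ('p, 'c, 'v) lit set \<Rightarrow> bool" where
  "minimal_model lt R M \<longleftrightarrow> is_model lt R M \<and> \<not> (\<exists>N. N \<subset> M \<and> is_model lt R N)"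

text \<open>The reduction G_I(P) (steps (1),(2)); step (3) and pos(.) are realised by reading
  only Head and Body+ of the remaining rules, with literals treated as atoms.\<close>
definition reduct ::
  "('o \<Rightarrow> 'o \<Rightarrow> bool) \<Rightarrow> ('o \<times> ('p, 'c, 'v) rule) set \<Rightarrow> ('p, 'c, 'v) lit set
     \<Rightarrow> ('o \<times> ('p, 'c, 'v) rule) set" where
  "reduct lt R I = {r \<in> ground R. \<not> overridden lt R r I \<and> BodyN (snd r) \<inter> I = {}}"

text \<open>X (a set of literals regarded as atoms) satisfies the positive disjunctive program
  pos(S): every rule with Body+ in X has some head literal in X.\<close>
definition pos_model ::
  "('o \<times> ('p, 'c, 'v) rule) set \<Rightarrow> ('p, 'c, 'v) lit set \<Rightarrow> bool" where
  "pos_model S X \<longleftrightarrow> (\<forall>r\<in>S. BodyP (snd r) \<subseteq> X \<longrightarrow> Head (snd r) \<inter> X \<noteq> {})"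

definition pos_minimal_model ::
  "('o \<times> ('p, 'c, 'v) rule) set \<Rightarrow> ('p, 'c, 'v) lit set \<Rightarrow> bool" where
  "pos_minimal_model S X \<longleftrightarrow> pos_model S X \<and> \<not> (\<exists>Y. Y \<subset> X \<and> pos_model S Y)"

definition answer_set ::
  "('o \<Rightarrow> 'o \<Rightarrow> bool) \<Rightarrow> ('o \<times> ('p, 'c, 'v) rule) set \<Rightarrow> ('p, 'c, 'v) lit set \<Rightarrow> bool" where
  "answer_set lt R M \<longleftrightarrow> is_model lt R M \<and> pos_minimal_model (reduct lt R M) M"

end

theory Submission
  imports Defs
begin

text \<open>If a model N of the program is contained in an answer set M, then N is also a model
  of the positive program pos(G_M): the reduct keeps only rules whose negative body is false
  in M (hence in N) and which are not overridden in M; overriding is monotone in the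
  interpretation, so such a rule is not overridden in N either and must be satisfied there.
  Minimality of M for pos(G_M) then forces N = M. The argument works for an arbitrary set of
  rules.\<close>

lemma body_true_subset:
  assumes "body_true r M" and "BodyP r \<subseteq> N" and "N \<subseteq> M"
  shows "body_true r N"
  using assms by (auto simp: body_true_def)

lemma overridden_mono:
  assumes "overridden lt R r N" and "N \<subseteq> M" and "body_true (snd r) M"
  shows "overridden lt R r M"
  using assms unfolding overridden_def overrides_def by blast

lemma model_subset_imp_pos_model_reduct:
  assumes model: "is_model lt R N" and "N \<subseteq> M"
  shows "pos_model (reduct lt R M) N"
  unfolding pos_model_def
proof (intro ballI impI)
  fix r
  assume r: "r \<in> reduct lt R M" and body_pos: "BodyP (snd r) \<subseteq> N"
  have ground: "r \<in> ground R" and not_overridden: "\<not> overridden lt R r M"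
    and body_neg: "BodyN (snd r) \<inter> M = {}"
    using r by (auto simp: reduct_def)
  have body_M: "body_true (snd r) M"
    using body_pos body_neg \<open>N \<subseteq> M\<close> by (auto simp: body_true_def)
  then have body_N: "body_true (snd r) N"
    using body_pos \<open>N \<subseteq> M\<close> by (rule body_true_subset)
  have "\<not> overridden lt R r N"
    using overridden_mono[OF _ \<open>N \<subseteq> M\<close> body_M] not_overridden by blast
  with model ground have "satisfied (snd r) N"
    by (auto simp: is_model_def)
  with body_N show "Head (snd r) \<inter> N \<noteq> {}"
    by (simp add: satisfied_def head_true_def)
qed

lemma answer_set_imp_minimal_model:
  assumes "answer_set lt R M"
  shows "minimal_model lt R M"
proof -
  have model: "is_model lt R M" and minimal: "pos_minimal_model (reduct lt R M) M"
    using assms by (auto simp: answer_set_def)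
  have "\<not> is_model lt R N" if "N \<subset> M" for N
    using minimal that model_subset_imp_pos_model_reduct[of lt R N M]
    by (auto simp: pos_minimal_model_def)
  with model show ?thesis
    by (auto simp: minimal_model_def)
qed

theorem proposition3p1:
  fixes Ids :: "'o set" and lt :: "'o \<Rightarrow> 'o \<Rightarrow> bool"
    and Sig :: "'o \<Rightarrow> ('p, 'c, 'v) rule set" and o0 :: 'o
    and M :: "('p, 'c, 'v) lit set"
  assumes "finite Ids" and "strict_po_on Ids lt" and "o0 \<in> Ids"
    and "\<And>o0'. o0' \<in> Ids \<Longrightarrow> finite (Sig o0')"
    and "\<And>o0' r. o0' \<in> Ids \<Longrightarrow> r \<in> Sig o0' \<Longrightarrow> hd r \<noteq> []"
    and "answer_set lt (prog_rules Ids lt Sig o0) M"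
  shows "minimal_model lt (prog_rules Ids lt Sig o0) M"
  using assms(6) by (rule answer_set_imp_minimal_model)

end
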